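(* Let $k\ge1$ and $n\ge1$ be integers. Then $$\sum_{j=0}^{n-1}\binom{n+k-2}{n-j-1}x^{k+j}F^{(k)}_{(k-1)j}(x)=xF^{(k)}_{kn-1}(x)=\sum_{j=0}^{n}\binom{n-1}{n-j}x^{j}F^{(k)}_{(k-1)j}(x).$$
   Context: Binomial coefficients: for integers $m\ge 0$ and $j$, $\binom{m}{j}$ is the usual binomial coefficient, with $\binom{m}{j}=0$ if $j<0$ or $j>m$. For an integer $k\ge1$, the generalized Fibonacci polynomials $F^{(k)}_n(x)\in\mathbb{Z}[x]$ ($n\ge0$) are defined by $F^{(k)}_n(x)=x^n$ for $0\le n<k$ and $F^{(k)}_n(x)=xF^{(k)}_{n-1}(x)+F^{(k)}_{n-k}(x)$ for $n\ge k$. *)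

theory Defs
  imports "HOL-Computational_Algebra.Polynomial"
begin

function genFib :: "nat \<Rightarrow> nat \<Rightarrow> int poly" where
  "genFib k n =
     (if k = 0 then 0
      else if n < k then monom 1 n
      else pCons 0 (genFib k (n - 1)) + genFib k (n - k))"
  by auto
termination
  by (relation "measure (\<lambda>(k, n). n)") auto

end

theory Submission
  imports Defs
begin

text \<open>The recurrence says that the shift operator \<open>E\<close> acting on \<open>F = F\<^sup>(\<^sup>k\<^sup>)\<close>
  satisfies \<open>E\<^sup>k = x E\<^sup>k\<^sup>-\<^sup>1 + 1\<close>, hence \<open>E\<^sup>k\<^sup>m = (x E\<^sup>k\<^sup>-\<^sup>1 + 1)\<^sup>m\<close>; applied at index
  \<open>k - 1\<close> with \<open>m = n - 1\<close> this is the second identity. For the first one, extend \<open>F\<close> to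
  negative indices by running the recurrence backwards and expand with \<open>m = n + k - 2\<close>
  at index \<open>-(k - 1)\<^sup>2\<close>. The first \<open>k - 1\<close> terms then sit at indices \<open>-(k - 1) l\<close>
  with \<open>1 \<le> l < k\<close>; these are not of the form \<open>k r + (k - 1) s\<close> with \<open>r \<ge> 1\<close>, and by
  induction the backward extension vanishes at all negative indices not of this form.\<close>

declare genFib.simps[simp del]

lemma genFib_below:
  assumes "k \<ge> 1" and "n < k"
  shows "genFib k n = [:0, 1:] ^ n"
  using assms by (subst genFib.simps) (simp add: monom_altdef)

lemma genFib_rec:
  assumes "k \<ge> 1" and "n \<ge> k"
  shows "genFib k n = [:0, 1:] * genFib k (n - 1) + genFib k (n - k)"
  using assms by (subst genFib.simps) simp

lemma sum_choose_Suc_split: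
  fixes h :: "nat \<Rightarrow> 'a::comm_ring_1"
  shows "(\<Sum>i\<le>Suc m. of_nat (Suc m choose i) * h i)
       = (\<Sum>i\<le>m. of_nat (m choose i) * h (Suc i)) + (\<Sum>i\<le>m. of_nat (m choose i) * h i)"
proof -
  have "(\<Sum>i\<le>Suc m. of_nat (Suc m choose i) * h i)
      = (\<Sum>i\<le>m. of_nat (m choose i) * h (Suc i))
        + (h 0 + (\<Sum>i\<le>m. of_nat (m choose Suc i) * h (Suc i)))"
    by (simp only: sum.atMost_Suc_shift binomial_Suc_Suc of_nat_add distrib_right
        sum.distrib) (simp add: ac_simps)
  also have "h 0 + (\<Sum>i\<le>m. of_nat (m choose Suc i) * h (Suc i))
      = (\<Sum>i\<le>Suc m. of_nat (m choose i) * h i)"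
    by (subst sum.atMost_Suc_shift) simp
  also have "\<dots> = (\<Sum>i\<le>m. of_nat (m choose i) * h i)"
    by (simp add: binomial_eq_0)
  finally show ?thesis .
qed

lemma shift_recurrence_binomial:
  fixes g :: "nat \<Rightarrow> 'a::comm_ring_1"
  assumes rec: "\<And>s. g (s + b) = c * g (s + d) + g s"
  shows "g (t + b * m) = (\<Sum>i\<le>m. of_nat (m choose i) * c ^ i * g (t + d * i))"
proof (induction m arbitrary: t)
  case 0
  show ?case by simp
next
  case (Suc m)
  have "g (t + b * Suc m) = c * g ((t + d) + b * m) + g (t + b * m)"
    using rec[of "t + b * m"] by (simp add: algebra_simps)
  also have "\<dots> = c * (\<Sum>i\<le>m. of_nat (m choose i) * c ^ i * g (t + d * Suc i))
                  + (\<Sum>i\<le>m. of_nat (m choose i) * c ^ i * g (t + d * i))"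
    using Suc.IH[of "t + d"] Suc.IH[of t] by (simp add: algebra_simps)
  also have "\<dots> = (\<Sum>i\<le>Suc m. of_nat (Suc m choose i) * (c ^ i * g (t + d * i)))"
    by (simp only: sum_choose_Suc_split sum_distrib_left) (simp add: mult_ac)
  finally show ?case
    by (simp add: mult.assoc)
qed

text \<open>For \<open>k = 1\<close> running the recurrence backwards would require dividing by \<open>x + 1\<close>,
  so there the negative-index values are junk \<open>0\<close>.\<close>

function genFibInt :: "nat \<Rightarrow> int \<Rightarrow> int poly" where
  "genFibInt k N =
     (if N \<ge> 0 then genFib k (nat N)
      else if k < 2 then 0
      else genFibInt k (N + int k) - [:0, 1:] * genFibInt k (N + int k - 1))"
  by auto
termination
  by (relation "measure (\<lambda>(k, N). nat (- N))") auto

declare genFibInt.simps[simp del]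

lemma genFibInt_of_nat [simp]: "genFibInt k (int n) = genFib k n"
  by (subst genFibInt.simps) simp

lemma genFibInt_rec:
  assumes "k \<ge> 1" and "k \<ge> 2 \<or> N \<ge> int k"
  shows "genFibInt k N = [:0, 1:] * genFibInt k (N - 1) + genFibInt k (N - int k)"
proof (cases "N \<ge> int k")
  case True
  then have "N = int (nat N)" "N - 1 = int (nat N - 1)" "N - int k = int (nat N - k)"
    using assms(1) by auto
  moreover have "nat N \<ge> k"
    using True by linarith
  ultimately show ?thesis
    using assms(1) genFib_rec[of k "nat N"] by (metis genFibInt_of_nat)
next
  case False
  then show ?thesis
    using assms by (subst (2) genFibInt.simps) simp
qed

definition k_representable :: "nat \<Rightarrow> nat \<Rightarrow> bool" where
  "k_representable k d \<longleftrightarrow> (\<exists>r s. r \<ge> 1 \<and> d = k * r + (k - 1) * s)"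

lemma k_representable_self: "k_representable k k"
  unfolding k_representable_def by (rule exI[of _ 1], rule exI[of _ 0]) simp

lemma k_representable_add_k:
  assumes "k_representable k d"
  shows "k_representable k (d + k)"
proof -
  obtain r s where "r \<ge> 1" "d = k * r + (k - 1) * s"
    using assms unfolding k_representable_def by blast
  then show ?thesis
    unfolding k_representable_def by (intro exI[of _ "r + 1"] exI[of _ s]) (simp add: distrib_left)
qed

lemma k_representable_add_pred:
  assumes "k_representable k d"
  shows "k_representable k (d + (k - 1))"
proof -
  obtain r s where "r \<ge> 1" "d = k * r + (k - 1) * s"
    using assms unfolding k_representable_def by blast
  then show ?thesis
    unfolding k_representable_def by (intro exI[of _ r] exI[of _ "s + 1"]) (simp add: distrib_left)
qed

lemma genFibInt_neg_eq_0:
  assumes "k \<ge> 2" and "d > 0" and "\<not> k_representable k d"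
  shows "genFibInt k (- int d) = 0"
  using assms(2,3)
proof (induction d rule: less_induct)
  case (less d)
  have unfold: "genFibInt k (- int d)
      = genFibInt k (int k - int d) - [:0, 1:] * genFibInt k (int k - int d - 1)"
    using assms(1) less.prems(1) by (subst genFibInt.simps) simp
  have "d \<noteq> k"
    using less.prems(2) k_representable_self by blast
  show ?case
  proof (cases "d < k")
    case True
    define e where "e = k - d"
    have "int k - int d = int e" "int e - 1 = int (e - 1)" "e = Suc (e - 1)"
      using True less.prems(1) by (auto simp: e_def)
    moreover have "genFib k (Suc (e - 1)) = [:0, 1:] * genFib k (e - 1)"
      using True assms(1) less.prems(1) by (simp add: genFib_below e_def)
    ultimately show ?thesis
      using unfold by (metis diff_self genFibInt_of_nat)
  next
    case False
    with \<open>d \<noteq> k\<close> have "d > k" by simp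
    have "d - k + k = d" "d - k + 1 + (k - 1) = d"
      using \<open>d > k\<close> assms(1) by auto
    then have "\<not> k_representable k (d - k)" "\<not> k_representable k (d - k + 1)"
      using less.prems(2) k_representable_add_k[of k "d - k"] k_representable_add_pred[of k "d - k + 1"]
      by auto
    then have "genFibInt k (- int (d - k)) = 0" "genFibInt k (- int (d - k + 1)) = 0"
      using \<open>d > k\<close> assms(1) less.IH[of "d - k"] less.IH[of "d - k + 1"] by auto
    moreover have "int k - int d = - int (d - k)" "- int (d - k) - 1 = - int (d - k + 1)"
      using \<open>d > k\<close> by auto
    ultimately show ?thesis
      unfolding unfold by (simp only: mult_zero_right diff_zero)
  qed
qed

lemma small_multiple_not_k_representable:
  fixes k l :: nat
  assumes "1 \<le> l" and "l < k"
  shows "\<not> k_representable k ((k - 1) * l)"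
proof
  assume "k_representable k ((k - 1) * l)"
  then obtain r s where r: "r \<ge> 1" and eq: "(k - 1) * l = k * r + (k - 1) * s"
    unfolding k_representable_def by blast
  obtain j where k: "k = Suc j"
    using assms by (cases k) auto
  have "(k - 1) * l = (k - 1) * (r + s) + r"
    using eq unfolding k by (simp add: algebra_simps)
  then have "(k - 1) dvd r"
    by (metis dvd_add_right_iff dvd_triv_left)
  then have "r \<ge> k - 1"
    using r by (simp add: dvd_imp_le)
  then have "k * r \<ge> k * (k - 1)"
    by simp
  moreover have "(k - 1) * l < k * (k - 1)"
    using assms by simp
  ultimately show False
    using eq by linarith
qed

lemma genFibInt_neg_multiple_eq_0:
  assumes "1 \<le> l" and "l < k"
  shows "genFibInt k (- int ((k - 1) * l)) = 0"
  using assms by (intro genFibInt_neg_eq_0 small_multiple_not_k_representable) auto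

lemma X_mult_genFib_eq_sum_choose_n_minus_1:
  assumes "k \<ge> 1" and "n \<ge> 1"
  shows "[:0, 1:] * genFib k (k * n - 1)
       = (\<Sum>j = 0..n. of_nat ((n - 1) choose (n - j)) * [:0, 1:] ^ j * genFib k ((k - 1) * j))"
proof -
  obtain m where n: "n = Suc m"
    using assms(2) by (cases n) auto
  have "genFib k (s + k) = [:0, 1:] * genFib k (s + (k - 1)) + genFib k s" for s
    using genFib_rec[of k "s + k"] assms(1) by simp
  then have expand: "genFib k ((k - 1) + k * m)
      = (\<Sum>i\<le>m. of_nat (m choose i) * [:0, 1:] ^ i * genFib k ((k - 1) + (k - 1) * i))"
    by (rule shift_recurrence_binomial)
  have "k * n - 1 = (k - 1) + k * m"
    using assms(1) n by (cases k) auto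
  then have "[:0, 1:] * genFib k (k * n - 1)
      = [:0, 1:] * (\<Sum>i\<le>m. of_nat (m choose i) * [:0, 1:] ^ i * genFib k ((k - 1) + (k - 1) * i))"
    using expand by simp
  also have "\<dots> = (\<Sum>i\<le>m. of_nat (m choose (m - i)) * [:0, 1:] ^ Suc i * genFib k ((k - 1) * Suc i))"
    by (auto simp: sum_distrib_left binomial_symmetric[symmetric] ac_simps intro!: sum.cong)
  also have "\<dots> = (\<Sum>j = 0..n. of_nat ((n - 1) choose (n - j)) * [:0, 1:] ^ j * genFib k ((k - 1) * j))"
    unfolding n by (subst sum.atLeast0_atMost_Suc_shift) (simp add: binomial_eq_0 atLeast0AtMost)
  finally show ?thesis .
qed

lemma genFibInt_offset_expansion:
  assumes "k \<ge> 1"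
  shows "genFibInt k (int (k * M) - int ((k - 1) * (k - 1)))
       = (\<Sum>i\<le>M. of_nat (M choose i) * [:0, 1:] ^ i
                    * genFibInt k (int ((k - 1) * i) - int ((k - 1) * (k - 1))))"
proof -
  define g where "g s = genFibInt k (int s - int ((k - 1) * (k - 1)))" for s
  have "g (s + k) = [:0, 1:] * g (s + (k - 1)) + g s" for s
  proof -
    define N where "N = int (s + k) - int ((k - 1) * (k - 1))"
    have "genFibInt k N = [:0, 1:] * genFibInt k (N - 1) + genFibInt k (N - int k)"
      using assms by (rule genFibInt_rec) (cases "k = 1", auto simp: N_def)
    moreover have "N - 1 = int (s + (k - 1)) - int ((k - 1) * (k - 1))"
      "N - int k = int s - int ((k - 1) * (k - 1))"
      using assms by (auto simp: N_def)
    ultimately show ?thesis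
      unfolding g_def N_def[symmetric] by simp
  qed
  then have "g (0 + k * M) = (\<Sum>i\<le>M. of_nat (M choose i) * [:0, 1:] ^ i * g (0 + (k - 1) * i))"
    by (rule shift_recurrence_binomial)
  then show ?thesis
    by (simp add: g_def)
qed

lemma genFib_eq_sum_choose_offset:
  assumes "k \<ge> 1"
  shows "genFib k (k * m + (k - 1))
       = (\<Sum>j = 0..m. of_nat ((m + (k - 1)) choose (m - j)) * [:0, 1:] ^ (j + (k - 1))
                      * genFib k ((k - 1) * j))"
proof -
  define M where "M = m + (k - 1)"
  define g where "g i = genFibInt k (int ((k - 1) * i) - int ((k - 1) * (k - 1)))" for i
  have "k * M = (k * m + (k - 1)) + (k - 1) * (k - 1)"
    using assms unfolding M_def by (cases k) (auto simp: algebra_simps)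
  then have "int (k * M) - int ((k - 1) * (k - 1)) = int (k * m + (k - 1))"
    by linarith
  then have expand: "genFib k (k * m + (k - 1)) = (\<Sum>i\<le>M. of_nat (M choose i) * [:0, 1:] ^ i * g i)"
    using genFibInt_offset_expansion[OF assms, of M] unfolding g_def by (simp only: genFibInt_of_nat)
  have low: "g i = 0" if "i < k - 1" for i
  proof -
    have "(k - 1) * i + (k - 1) * (k - 1 - i) = (k - 1) * (k - 1)"
      using that by (simp flip: add_mult_distrib2)
    then have "int ((k - 1) * i) - int ((k - 1) * (k - 1)) = - int ((k - 1) * (k - 1 - i))"
      by linarith
    moreover have "1 \<le> k - 1 - i" "k - 1 - i < k"
      using that by auto
    ultimately show ?thesis
      unfolding g_def by (simp only: genFibInt_neg_multiple_eq_0)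
  qed
  have high: "g (j + (k - 1)) = genFib k ((k - 1) * j)" for j
  proof -
    have "int ((k - 1) * (j + (k - 1))) - int ((k - 1) * (k - 1)) = int ((k - 1) * j)"
      by (simp add: add_mult_distrib2)
    then show ?thesis
      unfolding g_def by (simp only: genFibInt_of_nat)
  qed
  have "(\<Sum>i\<le>M. of_nat (M choose i) * [:0, 1:] ^ i * g i)
      = (\<Sum>i = k - 1..M. of_nat (M choose i) * [:0, 1:] ^ i * g i)"
    by (rule sum.mono_neutral_right) (auto simp: low[unfolded One_nat_def])
  also have "\<dots> = (\<Sum>j = 0..m. of_nat (M choose (j + (k - 1))) * [:0, 1:] ^ (j + (k - 1))
                                 * g (j + (k - 1)))"
    unfolding M_def using sum.shift_bounds_cl_nat_ivl[of _ 0 "k - 1" m] by simp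
  also have "\<dots> = (\<Sum>j = 0..m. of_nat (M choose (m - j)) * [:0, 1:] ^ (j + (k - 1))
                                 * genFib k ((k - 1) * j))"
  proof (rule sum.cong[OF refl])
    fix j
    assume "j \<in> {0..m}"
    then have "M choose (j + (k - 1)) = M choose (m - j)"
      unfolding M_def by (subst binomial_symmetric) auto
    then show "of_nat (M choose (j + (k - 1))) * [:0, 1:] ^ (j + (k - 1)) * g (j + (k - 1))
        = of_nat (M choose (m - j)) * [:0, 1:] ^ (j + (k - 1)) * genFib k ((k - 1) * j)"
      by (simp only: high)
  qed
  finally show ?thesis
    using expand by (simp add: M_def)
qed

lemma X_mult_genFib_eq_sum_choose_n_plus_k_minus_2:
  assumes "k \<ge> 1" and "n \<ge> 1"
  shows "[:0, 1:] * genFib k (k * n - 1)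
       = (\<Sum>j = 0..n - 1. of_nat ((n + k - 2) choose (n - j - 1)) * [:0, 1:] ^ (k + j)
                          * genFib k ((k - 1) * j))"
proof -
  obtain m where n: "n = Suc m"
    using assms(2) by (cases n) auto
  have "k * n - 1 = k * m + (k - 1)"
    using assms(1) n by (cases k) auto
  then have "[:0, 1:] * genFib k (k * n - 1)
      = (\<Sum>j = 0..m. of_nat ((m + (k - 1)) choose (m - j))
                      * ([:0, 1:] * [:0, 1:] ^ (j + (k - 1))) * genFib k ((k - 1) * j))"
    using genFib_eq_sum_choose_offset[OF assms(1), of m] by (simp add: sum_distrib_left ac_simps)
  also have "\<dots> = (\<Sum>j = 0..n - 1. of_nat ((n + k - 2) choose (n - j - 1)) * [:0, 1:] ^ (k + j)
                                  * genFib k ((k - 1) * j))"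
    using assms(1) unfolding n by (intro sum.cong) (auto simp: add.commute simp flip: power_Suc)
  finally show ?thesis .
qed

theorem mainTheorem16:
  fixes k n :: nat
  assumes "k \<ge> 1" and "n \<ge> 1"
  shows "(\<Sum>j = 0..n-1. of_nat ((n + k - 2) choose (n - j - 1)) * [:0, 1:] ^ (k + j) * genFib k ((k - 1) * j))
           = [:0, 1:] * genFib k (k * n - 1)
       \<and> [:0, 1:] * genFib k (k * n - 1)
           = (\<Sum>j = 0..n. of_nat ((n - 1) choose (n - j)) * [:0, 1:] ^ j * genFib k ((k - 1) * j))"
  using X_mult_genFib_eq_sum_choose_n_plus_k_minus_2[OF assms]
    X_mult_genFib_eq_sum_choose_n_minus_1[OF assms] by simp

end
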